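(* Let $\mathcal{X}$ be Polish with a lower semicontinuous metric $d$, $\theta:[0,\infty)\to[0,\infty)$ convex with $\theta(0)=0$, and $\mu$ a Borel probability measure on $\mathcal{X}$ such that $\mathcal{T}_{\theta(d)}(\nu,\mu)\le H(\nu|\mu)$ for all Borel probability measures $\nu$ on $\mathcal{X}$. Then $(\mu,\tilde c)$ satisfies Property $(\tau)$, where $\tilde c(x,y)=2\theta\big(d(x,y)/2\big)$.
   Context: $\mathcal{T}_{\theta(d)}(\nu,\mu)=\inf_\pi\int\theta(d(x,y))\,d\pi(x,y)$ over couplings $\pi$ of $\nu,\mu$; $H(\nu|\mu)=\int\log\frac{d\nu}{d\mu}d\nu$ if $\nu\ll\mu$, $+\infty$ otherwise. For a cost $c$ and bounded measurable $f$, $Q_cf(x)=\inf_{y}\{f(y)+c(x,y)\}$; $(\mu,c)$ satisfies Property $(\tau)$ if $\big(\int e^{Q_cf}d\mu\big)\big(\int e^{-f}d\mu\big)\le1$ for all bounded measurable $f:\mathcal{X}\to\mathbb{R}$. *)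

theory Defs
  imports "HOL-Probability.Probability"
begin

definition is_metric :: "('a \<Rightarrow> 'a \<Rightarrow> real) \<Rightarrow> bool" where
  "is_metric d \<longleftrightarrow>
     (\<forall>x y. 0 \<le> d x y) \<and> (\<forall>x y. d x y = 0 \<longleftrightarrow> x = y) \<and>
     (\<forall>x y. d x y = d y x) \<and> (\<forall>x y z. d x z \<le> d x y + d y z)"

definition lsc2 :: "('a::topological_space \<Rightarrow> 'a \<Rightarrow> real) \<Rightarrow> bool" where
  "lsc2 d \<longleftrightarrow> (\<forall>t. open {p :: 'a \<times> 'a. t < d (fst p) (snd p)})"

definition borel_prob :: "'a::topological_space measure \<Rightarrow> bool" where
  "borel_prob M \<longleftrightarrow> sets M = sets borel \<and> prob_space M"

definition couplings :: "'a::topological_space measure \<Rightarrow> 'a measure \<Rightarrow> ('a \<times> 'a) measure set" where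
  "couplings \<nu> \<mu> = {\<pi>. sets \<pi> = sets (borel \<Otimes>\<^sub>M borel) \<and> prob_space \<pi> \<and>
       distr \<pi> borel fst = \<nu> \<and> distr \<pi> borel snd = \<mu>}"

definition transport_cost ::
  "('a::topological_space \<Rightarrow> 'a \<Rightarrow> real) \<Rightarrow> 'a measure \<Rightarrow> 'a measure \<Rightarrow> ennreal" where
  "transport_cost c \<nu> \<mu> = (INF \<pi>\<in>couplings \<nu> \<mu>. \<integral>\<^sup>+ p. ennreal (c (fst p) (snd p)) \<partial>\<pi>)"

text \<open>The integral is taken as (positive part) - (negative part), the negative part being
  always finite for probability measures.\<close>
definition rel_entropy :: "'a measure \<Rightarrow> 'a measure \<Rightarrow> ereal" where
  "rel_entropy \<nu> \<mu> =
     (if absolutely_continuous \<mu> \<nu> then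
        enn2ereal (\<integral>\<^sup>+ x. ennreal (ln (enn2real (RN_deriv \<mu> \<nu> x))) \<partial>\<nu>)
        - enn2ereal (\<integral>\<^sup>+ x. ennreal (- ln (enn2real (RN_deriv \<mu> \<nu> x))) \<partial>\<nu>)
      else \<infinity>)"

definition Qc :: "('a \<Rightarrow> 'a \<Rightarrow> real) \<Rightarrow> ('a \<Rightarrow> real) \<Rightarrow> 'a \<Rightarrow> real" where
  "Qc c f x = (INF y. f y + c x y)"

definition property_tau :: "'a::topological_space measure \<Rightarrow> ('a \<Rightarrow> 'a \<Rightarrow> real) \<Rightarrow> bool" where
  "property_tau \<mu> c \<longleftrightarrow>
     (\<forall>f. f \<in> borel_measurable borel \<and> bounded (range f) \<longrightarrow>
        (\<integral>\<^sup>+ x. ennreal (exp (Qc c f x)) \<partial>\<mu>) * (\<integral>\<^sup>+ x. ennreal (exp (- f x)) \<partial>\<mu>) \<le> 1)"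

end

theory Submission
  imports Defs
begin

(* Let c be a nonnegative, symmetric, lower semicontinuous cost with T_c(nu, mu) <= H(nu|mu)
   for all nu, and let c' satisfy c'(x, y) <= c(x, z) + c(z, y).  Testing the inequality
   against the Gibbs measure nu ~ exp(u) mu gives the dual bound
   int exp(u) dmu <= exp(- int w dmu) whenever u(x) + w(z) <= c(x, z).  If a bounded Borel
   potential h satisfies k(x) - h(z) <= c(x, z) and h(z) - f(x) <= c(x, z), two applications
   give (int exp k)(int exp(-f)) <= 1.  Because Q_c' f need not be Borel, int exp(Q_c' f) is a
   supremum over simple functions g below it; inner regularity replaces the level sets of g
   by compact pieces up to epsilon, and for a step function k = log g on compact pieces the
   potential h (a maximum of infima of c over the pieces) is Borel by lower semicontinuity.
   This yields property_tau_of_transport_inequality; the main theorem is the instance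
   c = theta(d), c' = 2 theta(d/2), where convexity of theta supplies both the relaxed
   triangle inequality and the lower semicontinuity of theta(d). *)

lemma convex_on_mono_from_zero:
  fixes \<theta> :: "real \<Rightarrow> real"
  assumes cv: "convex_on {0..} \<theta>" and zero: "\<theta> 0 = 0" and nonneg: "\<forall>t\<ge>0. 0 \<le> \<theta> t"
    and st: "0 \<le> s" "s \<le> t"
  shows "\<theta> s \<le> \<theta> t"
proof (cases "t = 0")
  case True
  then show ?thesis using st by simp
next
  case False
  with st have t: "t > 0" by simp
  have "\<theta> ((1 - s/t) *\<^sub>R 0 + (s/t) *\<^sub>R t) \<le> (1 - s/t) * \<theta> 0 + (s/t) * \<theta> t"
    by (rule convex_onD[OF cv]) (use st t in auto)
  then have "\<theta> s \<le> (s/t) * \<theta> t" using t zero by simp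
  also have "\<dots> \<le> \<theta> t"
    using nonneg st t by (intro mult_left_le_one_le) auto
  finally show ?thesis .
qed

lemma convex_on_midpoint:
  fixes \<theta> :: "real \<Rightarrow> real"
  assumes "convex_on {0..} \<theta>" "0 \<le> a" "0 \<le> b"
  shows "2 * \<theta> ((a + b) / 2) \<le> \<theta> a + \<theta> b"
proof -
  have "\<theta> ((1 - 1/2) *\<^sub>R a + (1/2) *\<^sub>R b) \<le> (1 - 1/2) * \<theta> a + (1/2) * \<theta> b"
    by (rule convex_onD[OF assms(1)]) (use assms in auto)
  then show ?thesis by (simp add: add_divide_distrib)
qed

lemma half_cost_triangle:
  fixes d :: "'a \<Rightarrow> 'a \<Rightarrow> real" and \<theta> :: "real \<Rightarrow> real"
  assumes d: "is_metric d" and cv: "convex_on {0..} \<theta>" and zero: "\<theta> 0 = 0"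
    and nonneg: "\<forall>t\<ge>0. 0 \<le> \<theta> t"
  shows "2 * \<theta> (d x y / 2) \<le> \<theta> (d x z) + \<theta> (d z y)"
proof -
  have dpos: "\<And>x y. 0 \<le> d x y" and tri: "d x y \<le> d x z + d z y"
    using d unfolding is_metric_def by blast+
  have "\<theta> (d x y / 2) \<le> \<theta> ((d x z + d z y) / 2)"
    using tri dpos by (intro convex_on_mono_from_zero[OF cv zero nonneg]) auto
  also have "2 * \<dots> \<le> \<theta> (d x z) + \<theta> (d z y)"
    using dpos by (intro convex_on_midpoint[OF cv]) auto
  finally show ?thesis by simp
qed

text \<open>Composing a lower semicontinuous nonnegative d with theta keeps lower
  semicontinuity: theta is continuous on the open half-line and nondecreasing, so each
  superlevel set of theta o d is a union of superlevel sets of d.\<close>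
lemma lsc2_convex_comp:
  fixes d :: "'a::topological_space \<Rightarrow> 'a \<Rightarrow> real" and \<theta> :: "real \<Rightarrow> real"
  assumes lsc: "lsc2 d" and dpos: "\<forall>x y. 0 \<le> d x y"
    and cv: "convex_on {0..} \<theta>" and zero: "\<theta> 0 = 0" and nonneg: "\<forall>t\<ge>0. 0 \<le> \<theta> t"
  shows "lsc2 (\<lambda>x y. \<theta> (d x y))"
  unfolding lsc2_def
proof
  fix c :: real
  have left_approx: "\<exists>s\<ge>0. s < r \<and> c < \<theta> s" if r: "0 < r" and c: "0 \<le> c" "c < \<theta> r" for r
  proof -
    have "continuous_on {0<..} \<theta>"
      by (rule convex_on_continuous) (auto intro: convex_on_subset[OF cv])
    then have "(\<theta> \<longlongrightarrow> \<theta> r) (at_left r)"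
      using r by (auto simp: continuous_on_eq_continuous_at isCont_def filterlim_at_split)
    then have "eventually (\<lambda>s. c < \<theta> s) (at_left r)"
      by (rule order_tendstoD(1)[OF _ c(2)])
    then obtain b where b: "b < r" "\<And>s. b < s \<Longrightarrow> s < r \<Longrightarrow> c < \<theta> s"
      by (auto simp: eventually_at_left_field)
    show ?thesis
      using b r by (intro exI[of _ "(max b 0 + r) / 2"]) auto
  qed
  have "{p. c < \<theta> (d (fst p) (snd p))} =
      (if c < 0 then UNIV else (\<Union>s\<in>{s. 0 \<le> s \<and> c < \<theta> s}. {p. s < d (fst p) (snd p)}))"
  proof (cases "c < 0")
    case True
    then show ?thesis using nonneg dpos by (auto intro: less_le_trans)
  next
    case False
    have "c < \<theta> (d (fst p) (snd p))"
      if "0 \<le> s" "c < \<theta> s" "s < d (fst p) (snd p)" for s p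
      using that convex_on_mono_from_zero[OF cv zero nonneg, of s "d (fst p) (snd p)"] by auto
    moreover have "\<exists>s\<ge>0. s < d (fst p) (snd p) \<and> c < \<theta> s" if "c < \<theta> (d (fst p) (snd p))" for p
      using that False left_approx[of "d (fst p) (snd p)"] dpos zero
      by (metis linorder_not_le order_le_less)
    ultimately show ?thesis using False by (auto; meson)
  qed
  then show "open {p :: 'a \<times> 'a. c < \<theta> (d (fst p) (snd p))}"
    using lsc unfolding lsc2_def by auto
qed

lemma borel_prob_measurable:
  fixes f :: "'a::topological_space \<Rightarrow> 'b::topological_space"
  assumes "borel_prob M" "f \<in> borel_measurable borel"
  shows "f \<in> borel_measurable M"
proof -
  have "sets M = sets borel" using assms(1) by (simp add: borel_prob_def)
  then show ?thesis using assms(2) by (subst measurable_cong_sets[OF _ refl]) simp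
qed

lemma bounded_range_abs_le:
  fixes u :: "'a \<Rightarrow> real"
  assumes "bounded (range u)"
  obtains B where "\<And>x. \<bar>u x\<bar> \<le> B"
  using assms unfolding bounded_iff by auto

definition gibbs_measure :: "'a measure \<Rightarrow> ('a \<Rightarrow> real) \<Rightarrow> 'a measure" where
  "gibbs_measure \<mu> u = density \<mu> (\<lambda>x. ennreal (exp (u x) / (\<integral>y. exp (u y) \<partial>\<mu>)))"

lemma partition_function_pos:
  fixes u :: "'a::topological_space \<Rightarrow> real"
  assumes \<mu>: "borel_prob \<mu>" and u: "u \<in> borel_measurable borel" "\<And>x. \<bar>u x\<bar> \<le> B"
  shows "integrable \<mu> (\<lambda>x. exp (u x))" and "0 < (\<integral>x. exp (u x) \<partial>\<mu>)"
proof -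
  interpret prob_space \<mu> using \<mu> by (simp add: borel_prob_def)
  have [measurable]: "u \<in> borel_measurable \<mu>" using borel_prob_measurable[OF \<mu> u(1)] .
  show int: "integrable \<mu> (\<lambda>x. exp (u x))"
    using u(2) by (intro integrable_const_bound[where B="exp B"]) (auto simp: abs_le_iff)
  have lower: "exp (-B) \<le> exp (u x)" for x
    using u(2)[of x] by simp
  have "exp (-B) = (\<integral>x. exp (-B) \<partial>\<mu>)" by (simp add: prob_space)
  also have "\<dots> \<le> (\<integral>x. exp (u x) \<partial>\<mu>)"
    using lower by (intro integral_mono[OF _ int]) auto
  finally show "0 < (\<integral>x. exp (u x) \<partial>\<mu>)"
    using exp_gt_zero[of "-B"] by linarith
qed

lemma gibbs_measure_borel_prob:
  fixes u :: "'a::topological_space \<Rightarrow> real"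
  assumes \<mu>: "borel_prob \<mu>" and u: "u \<in> borel_measurable borel" "\<And>x. \<bar>u x\<bar> \<le> B"
  shows "borel_prob (gibbs_measure \<mu> u)"
proof -
  interpret prob_space \<mu> using \<mu> by (simp add: borel_prob_def)
  have [measurable]: "u \<in> borel_measurable \<mu>" using borel_prob_measurable[OF \<mu> u(1)] .
  define Z where "Z = (\<integral>x. exp (u x) \<partial>\<mu>)"
  have Z: "0 < Z" "integrable \<mu> (\<lambda>x. exp (u x))"
    using partition_function_pos[OF \<mu> u] by (auto simp: Z_def)
  have "(\<integral>\<^sup>+x. ennreal (exp (u x) / Z) \<partial>\<mu>) = ennreal (\<integral>x. exp (u x) / Z \<partial>\<mu>)"
    using Z by (intro nn_integral_eq_integral) auto
  also have "\<dots> = 1" using Z by (simp add: Z_def)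
  finally have "prob_space (gibbs_measure \<mu> u)"
    unfolding gibbs_measure_def Z_def[symmetric] by (intro prob_spaceI) (simp add: emeasure_density)
  then show ?thesis
    using \<mu> by (simp add: borel_prob_def gibbs_measure_def)
qed

lemma gibbs_measure_log_RN_deriv:
  fixes u :: "'a::topological_space \<Rightarrow> real"
  assumes \<mu>: "borel_prob \<mu>" and u: "u \<in> borel_measurable borel" "\<And>x. \<bar>u x\<bar> \<le> B"
  shows "absolutely_continuous \<mu> (gibbs_measure \<mu> u)"
    and "AE x in gibbs_measure \<mu> u. ln (enn2real (RN_deriv \<mu> (gibbs_measure \<mu> u) x))
           = u x - ln (\<integral>y. exp (u y) \<partial>\<mu>)"
proof -
  have [measurable]: "u \<in> borel_measurable \<mu>" using borel_prob_measurable[OF \<mu> u(1)] .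
  define Z where "Z = (\<integral>x. exp (u x) \<partial>\<mu>)"
  define \<rho> where "\<rho> x = ennreal (exp (u x) / Z)" for x
  define \<nu> where "\<nu> = gibbs_measure \<mu> u"
  have Z: "0 < Z" using partition_function_pos[OF \<mu> u] by (simp add: Z_def)
  have \<rho>_meas[measurable]: "\<rho> \<in> borel_measurable \<mu>" unfolding \<rho>_def by measurable
  have \<nu>: "\<nu> = density \<mu> \<rho>" unfolding \<nu>_def gibbs_measure_def \<rho>_def Z_def ..
  show "absolutely_continuous \<mu> (gibbs_measure \<mu> u)"
    using absolutely_continuousI_density[OF \<rho>_meas] by (simp flip: \<nu> \<nu>_def)
  have "prob_space \<nu>" using gibbs_measure_borel_prob[OF \<mu> u] by (simp add: \<nu>_def borel_prob_def)
  then have "AE x in \<mu>. \<rho> x = RN_deriv \<mu> \<nu> x"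
    unfolding \<nu> by (intro RN_deriv_unique_sigma_finite[OF \<rho>_meas])
      (auto simp: \<nu> intro: prob_space_imp_sigma_finite)
  then have "AE x in \<nu>. \<rho> x = RN_deriv \<mu> \<nu> x"
    unfolding \<nu> using AE_density[OF \<rho>_meas] by auto
  then show "AE x in gibbs_measure \<mu> u. ln (enn2real (RN_deriv \<mu> (gibbs_measure \<mu> u) x))
      = u x - ln (\<integral>y. exp (u y) \<partial>\<mu>)"
    unfolding \<nu>_def[symmetric] Z_def[symmetric]
  proof eventually_elim
    fix x assume "\<rho> x = RN_deriv \<mu> \<nu> x"
    then have "enn2real (RN_deriv \<mu> \<nu> x) = exp (u x) / Z"
      using Z by (auto simp: \<rho>_def)
    then show "ln (enn2real (RN_deriv \<mu> \<nu> x)) = u x - ln Z"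
      using Z by (simp add: ln_div)
  qed
qed

lemma rel_entropy_gibbs_measure:
  fixes u :: "'a::topological_space \<Rightarrow> real"
  assumes \<mu>: "borel_prob \<mu>" and u: "u \<in> borel_measurable borel" "\<And>x. \<bar>u x\<bar> \<le> B"
  shows "rel_entropy (gibbs_measure \<mu> u) \<mu> =
           ereal ((\<integral>x. u x \<partial>gibbs_measure \<mu> u) - ln (\<integral>x. exp (u x) \<partial>\<mu>))"
proof -
  define Z where "Z = (\<integral>x. exp (u x) \<partial>\<mu>)"
  define \<nu> where "\<nu> = gibbs_measure \<mu> u"
  interpret N: prob_space \<nu> using gibbs_measure_borel_prob[OF \<mu> u] by (simp add: \<nu>_def borel_prob_def)
  have "sets \<nu> = sets borel"
    using gibbs_measure_borel_prob[OF \<mu> u] by (simp add: \<nu>_def borel_prob_def)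
  then have [measurable]: "u \<in> borel_measurable \<nu>"
    using u(1) by (subst measurable_cong_sets[OF _ refl]) simp_all
  note log_density = gibbs_measure_log_RN_deriv[OF \<mu> u, folded \<nu>_def Z_def]
  have "\<bar>u x - ln Z\<bar> \<le> B + \<bar>ln Z\<bar>" for x
    using u(2)[of x] by arith
  then have int: "integrable \<nu> (\<lambda>x. u x - ln Z)"
    by (intro N.integrable_const_bound[where B="B + \<bar>ln Z\<bar>"]) (auto intro!: AE_I2)
  have "rel_entropy \<nu> \<mu> = enn2ereal (\<integral>\<^sup>+ x. ennreal (u x - ln Z) \<partial>\<nu>)
      - enn2ereal (\<integral>\<^sup>+ x. ennreal (- (u x - ln Z)) \<partial>\<nu>)"
    unfolding rel_entropy_def using log_density
    by (auto intro!: arg_cong2[where f="\<lambda>a b. enn2ereal a - enn2ereal b"]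
        nn_integral_cong_AE elim!: eventually_mono)
  also have "\<dots> = ereal (\<integral>x. u x - ln Z \<partial>\<nu>)"
    using int unfolding real_lebesgue_integral_def[OF int] real_integrable_def
    by (cases "\<integral>\<^sup>+ x. ennreal (u x - ln Z) \<partial>\<nu>"; cases "\<integral>\<^sup>+ x. ennreal (- (u x - ln Z)) \<partial>\<nu>") auto
  also have "(\<integral>x. u x - ln Z \<partial>\<nu>) = (\<integral>x. u x \<partial>\<nu>) - ln Z"
    using u(2) by (subst Bochner_Integration.integral_diff)
      (auto intro!: N.integrable_const_bound[where B=B] simp: N.prob_space)
  finally show ?thesis by (simp add: \<nu>_def Z_def)
qed

lemma transport_cost_lower_bound:
  fixes u w :: "'a::topological_space \<Rightarrow> real" and c :: "'a \<Rightarrow> 'a \<Rightarrow> real"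
  assumes u: "u \<in> borel_measurable borel" "\<And>x. \<bar>u x\<bar> \<le> B"
    and w: "w \<in> borel_measurable borel" "\<And>x. \<bar>w x\<bar> \<le> B"
    and dual: "\<And>x z. u x + w z \<le> c x z"
  shows "ennreal ((\<integral>x. u x \<partial>\<nu>) + (\<integral>z. w z \<partial>\<mu>)) \<le> transport_cost c \<nu> \<mu>"
  unfolding transport_cost_def
proof (rule INF_greatest)
  fix \<pi> assume "\<pi> \<in> couplings \<nu> \<mu>"
  then have sets: "sets \<pi> = sets (borel \<Otimes>\<^sub>M borel)" and "prob_space \<pi>"
    and marginals: "distr \<pi> borel fst = \<nu>" "distr \<pi> borel snd = \<mu>"
    unfolding couplings_def by auto
  interpret prob_space \<pi> by fact
  have [measurable]: "fst \<in> measurable \<pi> borel" "snd \<in> measurable \<pi> borel"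
    by (simp_all add: measurable_cong_sets[OF sets refl])
  define F where "F = (\<lambda>p. u (fst p) + w (snd p))"
  have int_u: "integrable \<pi> (\<lambda>p. u (fst p))" and int_w: "integrable \<pi> (\<lambda>p. w (snd p))"
    using u w by (auto intro!: integrable_const_bound[where B=B] AE_I2)
  then have int_F: "integrable \<pi> F" by (simp add: F_def)
  have "(\<integral>x. u x \<partial>\<nu>) + (\<integral>z. w z \<partial>\<mu>) = (\<integral>p. F p \<partial>\<pi>)"
    using int_u int_w u(1) w(1)
    by (simp add: F_def flip: marginals add: integral_distr)
  also have "\<dots> \<le> (\<integral>p. max 0 (F p) \<partial>\<pi>)"
    using int_F by (intro integral_mono) auto
  finally have "ennreal ((\<integral>x. u x \<partial>\<nu>) + (\<integral>z. w z \<partial>\<mu>)) \<le> (\<integral>\<^sup>+p. ennreal (max 0 (F p)) \<partial>\<pi>)"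
    using int_F by (subst nn_integral_eq_integral) (auto intro: integrable_max ennreal_leI)
  also have "\<dots> \<le> (\<integral>\<^sup>+p. ennreal (c (fst p) (snd p)) \<partial>\<pi>)"
    using dual by (intro nn_integral_mono) (auto simp: F_def intro!: ennreal_leI)
  finally show "ennreal ((\<integral>x. u x \<partial>\<nu>) + (\<integral>z. w z \<partial>\<mu>)) \<le> (\<integral>\<^sup>+p. ennreal (c (fst p) (snd p)) \<partial>\<pi>)" .
qed

text \<open>The dual form of the transport inequality: test it against the Gibbs measure of u.\<close>
lemma dual_exp_bound:
  fixes u w :: "'a::topological_space \<Rightarrow> real" and c :: "'a \<Rightarrow> 'a \<Rightarrow> real"
  assumes \<mu>: "borel_prob \<mu>"
    and transport: "\<forall>\<nu>. borel_prob \<nu> \<longrightarrow> enn2ereal (transport_cost c \<nu> \<mu>) \<le> rel_entropy \<nu> \<mu>"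
    and u: "u \<in> borel_measurable borel" "\<And>x. \<bar>u x\<bar> \<le> B"
    and w: "w \<in> borel_measurable borel" "\<And>x. \<bar>w x\<bar> \<le> B"
    and dual: "\<And>x z. u x + w z \<le> c x z"
  shows "(\<integral>x. exp (u x) \<partial>\<mu>) \<le> exp (- (\<integral>z. w z \<partial>\<mu>))"
proof -
  define \<nu> where "\<nu> = gibbs_measure \<mu> u"
  define Z where "Z = (\<integral>x. exp (u x) \<partial>\<mu>)"
  define A where "A = (\<integral>x. u x \<partial>\<nu>) + (\<integral>z. w z \<partial>\<mu>)"
  have "ereal A \<le> enn2ereal (ennreal A)"
    by (cases "0 \<le> A") (auto intro: order_trans[OF _ enn2ereal_nonneg])
  also have "\<dots> \<le> enn2ereal (transport_cost c \<nu> \<mu>)"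
    using transport_cost_lower_bound[OF u w dual] by (simp add: A_def less_eq_ennreal.rep_eq)
  also have "\<dots> \<le> rel_entropy \<nu> \<mu>"
    using transport gibbs_measure_borel_prob[OF \<mu> u] by (simp add: \<nu>_def)
  also have "\<dots> = ereal ((\<integral>x. u x \<partial>\<nu>) - ln Z)"
    using rel_entropy_gibbs_measure[OF \<mu> u] by (simp add: \<nu>_def Z_def)
  finally have "ln Z \<le> - (\<integral>z. w z \<partial>\<mu>)" by (simp add: A_def)
  moreover have "Z = exp (ln Z)"
    using partition_function_pos(2)[OF \<mu> u] by (simp add: Z_def)
  ultimately show ?thesis
    unfolding Z_def[symmetric] by (metis exp_le_cancel_iff)
qed

text \<open>Applying the dual form twice, through an intermediate potential h dual to both k and f.\<close>
lemma dual_product_bound: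
  fixes k h f :: "'a::topological_space \<Rightarrow> real" and c :: "'a \<Rightarrow> 'a \<Rightarrow> real"
  assumes \<mu>: "borel_prob \<mu>"
    and transport: "\<forall>\<nu>. borel_prob \<nu> \<longrightarrow> enn2ereal (transport_cost c \<nu> \<mu>) \<le> rel_entropy \<nu> \<mu>"
    and meas: "k \<in> borel_measurable borel" "h \<in> borel_measurable borel" "f \<in> borel_measurable borel"
    and bdd: "bounded (range k)" "bounded (range h)" "bounded (range f)"
    and dual: "\<And>x z. k x - h z \<le> c x z" "\<And>x z. h z - f x \<le> c x z"
  shows "(\<integral>x. exp (k x) \<partial>\<mu>) * (\<integral>x. exp (- f x) \<partial>\<mu>) \<le> 1"
proof -
  have "bounded (range k \<union> range h \<union> range f)" using bdd by simp
  then obtain B where "\<forall>y\<in>range k \<union> range h \<union> range f. \<bar>y\<bar> \<le> B"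
    by (auto simp: bounded_real)
  then have B: "\<And>x. \<bar>k x\<bar> \<le> B" "\<And>x. \<bar>h x\<bar> \<le> B" "\<And>x. \<bar>f x\<bar> \<le> B" by auto
  define H where "H = (\<integral>z. h z \<partial>\<mu>)"
  have "(\<integral>x. exp (k x) \<partial>\<mu>) \<le> exp H"
    using dual_exp_bound[OF \<mu> transport, of k B "\<lambda>z. - h z"] meas B dual(1) by (simp add: H_def)
  moreover have "(\<integral>x. exp (- f x) \<partial>\<mu>) \<le> exp (- H)"
    using dual_exp_bound[OF \<mu> transport, of "\<lambda>x. - f x" B h] meas B dual(2) by (simp add: H_def)
  ultimately have "(\<integral>x. exp (k x) \<partial>\<mu>) * (\<integral>x. exp (- f x) \<partial>\<mu>) \<le> exp H * exp (- H)"
    by (intro mult_mono) auto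
  then show ?thesis by (simp flip: exp_add)
qed

text \<open>The infimum of a lower semicontinuous cost over a compact set is a lower semicontinuous,
  hence Borel, function of the other variable (tube lemma).  This is where compactness is
  essential: an infimum over an arbitrary Borel set need not be Borel.\<close>
lemma inf_over_compact_borel_measurable:
  fixes c :: "'b::topological_space \<Rightarrow> 'a::topological_space \<Rightarrow> real"
  assumes lsc: "\<And>t. open {p. t < c (fst p) (snd p)}" and nonneg: "\<And>z x. 0 \<le> c z x"
    and K: "compact K" "K \<noteq> {}"
  shows "(\<lambda>z. Inf (c z ` K)) \<in> borel_measurable borel"
proof -
  define G where "G z = Inf (c z ` K)" for z
  have "open {z. a < G z}" for a
  proof (subst open_subopen, intro ballI)
    fix z0 assume "z0 \<in> {z. a < G z}"
    then have a: "a < G z0" by simp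
    define b where "b = (a + G z0) / 2"
    have "G z0 \<le> c z0 x" if "x \<in> K" for x
      unfolding G_def using that nonneg by (intro cInf_lower) (auto intro: bdd_belowI[of _ 0])
    then have "{z0} \<times> K \<subseteq> {p. b < c (fst p) (snd p)}"
      using a by (force simp: b_def)
    from Elementary_Topology.tube_lemma[OF K(1) lsc[of b] this] obtain X0
      where X0: "z0 \<in> X0" "open X0" "X0 \<times> K \<subseteq> {p. b < c (fst p) (snd p)}"
      by blast
    have "b \<le> G z" if "z \<in> X0" for z
      unfolding G_def using K(2) X0(3) that by (intro cInf_greatest) force+
    then have "X0 \<subseteq> {z. a < G z}"
      using a by (force simp: b_def)
    with X0 show "\<exists>T. open T \<and> z0 \<in> T \<and> T \<subseteq> {z. a < G z}" by blast
  qed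
  then show ?thesis
    unfolding borel_measurable_iff_greater G_def by simp
qed

lemma compact_piece_potential:
  fixes c :: "'a::topological_space \<Rightarrow> 'a \<Rightarrow> real"
  assumes lsc: "lsc2 c" and nonneg: "\<And>x y. 0 \<le> c x y" and K: "compact K" "K \<noteq> {}"
  shows "(\<lambda>z. a - Inf (c z ` K)) \<in> borel_measurable borel"
    and "a - Inf (c z ` K) \<le> a"
    and "x \<in> K \<Longrightarrow> a - (a - Inf (c z ` K)) \<le> c z x"
    and "(\<And>x'. x' \<in> K \<Longrightarrow> a \<le> f x + c z x' + c z x) \<Longrightarrow> (a - Inf (c z ` K)) - f x \<le> c z x"
proof -
  have "\<And>t. open {p. t < c (fst p) (snd p)}" using lsc by (simp add: lsc2_def)
  then show "(\<lambda>z. a - Inf (c z ` K)) \<in> borel_measurable borel"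
    using inf_over_compact_borel_measurable[of c, OF _ nonneg K] by (intro borel_measurable_diff) simp_all
  show "a - Inf (c z ` K) \<le> a"
    using K(2) nonneg by (simp, intro cInf_greatest) auto
  show "x \<in> K \<Longrightarrow> a - (a - Inf (c z ` K)) \<le> c z x"
    using nonneg by (simp, intro cInf_lower) (auto intro: bdd_belowI[of _ 0])
  assume "\<And>x'. x' \<in> K \<Longrightarrow> a \<le> f x + c z x' + c z x"
  then have "a - f x - c z x \<le> Inf (c z ` K)"
    using K(2) by (intro cInf_greatest) force+
  then show "(a - Inf (c z ` K)) - f x \<le> c z x" by simp
qed

text \<open>Gluing finitely many such pieces by a maximum (and a floor -M) gives a bounded Borel
  potential h that is dual both to f and to every value a v on its compact piece K v.\<close>
lemma compact_pieces_potential: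
  fixes c :: "'a::topological_space \<Rightarrow> 'a \<Rightarrow> real" and f :: "'a \<Rightarrow> real" and a :: "'i \<Rightarrow> real"
  assumes lsc: "lsc2 c" and nonneg: "\<And>x y. 0 \<le> c x y" and f: "\<And>x. \<bar>f x\<bar> \<le> M"
    and V: "finite V" and K: "\<And>v. v \<in> V \<Longrightarrow> compact (K v) \<and> K v \<noteq> {}"
    and below: "\<And>v x' x z. v \<in> V \<Longrightarrow> x' \<in> K v \<Longrightarrow> a v \<le> f x + c z x' + c z x"
  shows "\<exists>h. h \<in> borel_measurable borel \<and> bounded (range h) \<and> (\<forall>z. -M \<le> h z)
           \<and> (\<forall>x z. h z - f x \<le> c z x) \<and> (\<forall>v\<in>V. \<forall>x\<in>K v. \<forall>z. a v - h z \<le> c z x)"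
  using V K below
proof (induction V rule: finite_induct)
  case empty
  have "- M - f x \<le> c z x" for x z
    using f[of x] nonneg[of z x] by arith
  then show ?case by (intro exI[of _ "\<lambda>_. -M"]) auto
next
  case (insert v V)
  then obtain h where h: "h \<in> borel_measurable borel" "bounded (range h)" "\<forall>z. -M \<le> h z"
    "\<forall>x z. h z - f x \<le> c z x" "\<forall>w\<in>V. \<forall>x\<in>K w. \<forall>z. a w - h z \<le> c z x"
    by auto
  obtain B where B: "\<And>z. \<bar>h z\<bar> \<le> B" using bounded_range_abs_le[OF h(2)] by blast
  have Kv: "compact (K v)" "K v \<noteq> {}" using insert.prems(1) by auto
  define \<phi> where "\<phi> z = a v - Inf (c z ` K v)" for z
  note piece = compact_piece_potential[where a="a v", OF lsc nonneg Kv, folded \<phi>_def]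
  define h' where "h' z = max (h z) (\<phi> z)" for z
  have "\<bar>h' z\<bar> \<le> max B \<bar>a v\<bar>" for z
    using B[of z] piece(2)[of z] by (auto simp: h'_def abs_le_iff max_def)
  then have "bounded (range h')" by (auto simp: bounded_real)
  moreover have "h' \<in> borel_measurable borel"
    unfolding h'_def using h(1) piece(1) by (simp add: \<phi>_def[abs_def])
  moreover have "\<forall>z. -M \<le> h' z"
    using h(3) by (auto simp: h'_def le_max_iff_disj)
  moreover have "\<forall>x z. h' z - f x \<le> c z x"
    using h(4) piece(4) insert.prems(2)[of v] by (auto simp: h'_def max_def)
  moreover have "\<forall>w\<in>insert v V. \<forall>x\<in>K w. \<forall>z. a w - h' z \<le> c z x"
  proof (intro ballI allI)
    fix w x z assume w: "w \<in> insert v V" and x: "x \<in> K w"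
    have "\<phi> z \<le> h' z" "h z \<le> h' z" by (simp_all add: h'_def)
    moreover have "a v - \<phi> z \<le> c z x" if "w = v"
      using piece(3) x that by simp
    moreover have "a w - h z \<le> c z x" if "w \<in> V"
      using h(5) x that by blast
    ultimately show "a w - h' z \<le> c z x"
      using w by auto
  qed
  ultimately show ?case by blast
qed

lemma Qc_le:
  fixes c :: "'a \<Rightarrow> 'a \<Rightarrow> real"
  assumes "\<And>y. - M \<le> f y" and "\<And>x y. 0 \<le> c x y"
  shows "Qc c f x \<le> f y + c x y"
  unfolding Qc_def using assms by (intro cINF_lower bdd_belowI[of _ "- M"]) (auto intro: add_increasing2)

lemma exp_integral_bound_for_compact_pieces:
  fixes c c' :: "'a::topological_space \<Rightarrow> 'a \<Rightarrow> real" and f k :: "'a \<Rightarrow> real" and a :: "'i \<Rightarrow> real"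
  assumes \<mu>: "borel_prob \<mu>"
    and transport: "\<forall>\<nu>. borel_prob \<nu> \<longrightarrow> enn2ereal (transport_cost c \<nu> \<mu>) \<le> rel_entropy \<nu> \<mu>"
    and lsc: "lsc2 c" and nonneg: "\<And>x y. 0 \<le> c x y" and sym: "\<And>x y. c x y = c y x"
    and c'_nonneg: "\<And>x y. 0 \<le> c' x y" and c'_le: "\<And>x y z. c' x y \<le> c x z + c z y"
    and f: "f \<in> borel_measurable borel" "\<And>x. \<bar>f x\<bar> \<le> M"
    and V: "finite V" and K: "\<And>v. v \<in> V \<Longrightarrow> compact (K v) \<and> K v \<noteq> {}"
    and a: "\<And>v x. v \<in> V \<Longrightarrow> x \<in> K v \<Longrightarrow> a v \<le> Qc c' f x"
    and k: "k \<in> borel_measurable borel" "bounded (range k)"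
    and k_pieces: "\<And>x. k x \<le> - M \<or> (\<exists>v\<in>V. x \<in> K v \<and> k x \<le> a v)"
  shows "(\<integral>x. exp (k x) \<partial>\<mu>) * (\<integral>x. exp (- f x) \<partial>\<mu>) \<le> 1"
proof -
  have "a v \<le> f x + c z x' + c z x" if "v \<in> V" "x' \<in> K v" for v x' x z
  proof -
    have "- M \<le> f y" for y using f(2)[of y] by arith
    then have "a v \<le> f x + c' x' x"
      using a[OF that] Qc_le[of M f c'] c'_nonneg by (blast intro: order_trans)
    also have "\<dots> \<le> f x + c z x' + c z x"
      using c'_le[of x' x z] sym[of x' z] by simp
    finally show ?thesis .
  qed
  then have "\<exists>h. h \<in> borel_measurable borel \<and> bounded (range h) \<and> (\<forall>z. -M \<le> h z)
      \<and> (\<forall>x z. h z - f x \<le> c z x) \<and> (\<forall>v\<in>V. \<forall>x\<in>K v. \<forall>z. a v - h z \<le> c z x)"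
    using compact_pieces_potential[where c=c and f=f and M=M and V=V and K=K and a=a,
        OF lsc nonneg f(2) V K] by blast
  then obtain h where h: "h \<in> borel_measurable borel" "bounded (range h)" "\<And>z. -M \<le> h z"
    "\<And>x z. h z - f x \<le> c z x" "\<And>v x z. v \<in> V \<Longrightarrow> x \<in> K v \<Longrightarrow> a v - h z \<le> c z x"
    by blast
  have "k x - h z \<le> c x z" for x z
    using k_pieces[of x] h(3)[of z] h(5)[of _ x z] nonneg[of x z] sym[of x z] by force
  moreover have "h z - f x \<le> c x z" for x z
    using h(4) sym by metis
  moreover have "bounded (range f)"
    using f(2) by (auto simp: bounded_real)
  ultimately show ?thesis
    using dual_product_bound[OF \<mu> transport k(1) h(1) f(1) k(2) h(2)] by blast
qed

lemma borel_prob_inner_compact: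
  fixes \<mu> :: "'a::{second_countable_topology, complete_space} measure"
  assumes \<mu>: "borel_prob \<mu>" and A: "A \<in> sets borel" and \<eta>: "0 < \<eta>"
  obtains K where "K \<subseteq> A" "compact K" "emeasure \<mu> (A - K) \<le> ennreal \<eta>"
proof -
  interpret prob_space \<mu> using \<mu> by (simp add: borel_prob_def)
  have sets: "sets \<mu> = sets borel" using \<mu> by (simp add: borel_prob_def)
  have "emeasure \<mu> A = (SUP K \<in> {K. K \<subseteq> A \<and> compact K}. emeasure \<mu> K)"
    using sets A by (intro inner_regular) auto
  moreover have "{K. K \<subseteq> A \<and> compact K} \<noteq> {}" by auto
  moreover have "emeasure \<mu> A \<noteq> \<infinity>" using emeasure_finite[of A] by simp
  ultimately have "\<exists>K\<in>{K. K \<subseteq> A \<and> compact K}. emeasure \<mu> A < emeasure \<mu> K + ennreal \<eta>"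
    by (intro SUP_approx_ennreal[OF \<eta>])
  then obtain K where K: "K \<subseteq> A" "compact K" "emeasure \<mu> A < emeasure \<mu> K + ennreal \<eta>"
    by blast
  have K_sets: "K \<in> sets \<mu>" using K(2) sets by (simp add: borel_compact)
  have "ennreal (measure \<mu> A) < ennreal (measure \<mu> K + \<eta>)"
    using K(3) \<eta> by (simp add: emeasure_eq_measure ennreal_plus)
  then have "measure \<mu> A < measure \<mu> K + \<eta>"
    by (subst (asm) ennreal_less_iff) auto
  then have "measure \<mu> (A - K) \<le> \<eta>"
    using K(1) K_sets A sets by (subst finite_measure_Diff) auto
  then show ?thesis
    using that[OF K(1,2)] by (simp add: emeasure_eq_measure ennreal_leI)
qed

lemma simple_function_compact_partition:
  fixes \<mu> :: "'a::{second_countable_topology, complete_space} measure" and g :: "'a \<Rightarrow> ennreal"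
  assumes \<mu>: "borel_prob \<mu>" and g: "simple_function \<mu> g" and \<eta>: "0 < \<eta>"
  obtains K where "\<And>v. compact (K v)" "\<And>v. K v \<subseteq> g -` {v}"
    "emeasure \<mu> (- (\<Union>v\<in>range g. K v)) \<le> ennreal \<eta>"
proof -
  interpret prob_space \<mu> using \<mu> by (simp add: borel_prob_def)
  have sets: "sets \<mu> = sets borel" using \<mu> by (simp add: borel_prob_def)
  have space: "space \<mu> = UNIV" using sets_eq_imp_space_eq[OF sets] by simp
  have fin: "finite (range g)" using g by (simp add: simple_function_def space)
  have level_sets: "g -` {v} \<in> sets borel" for v
    using simple_functionD(2)[OF g, of "{v}"] by (simp add: space sets)
  define \<delta> where "\<delta> = \<eta> / real (card (range g))"
  have \<delta>: "0 < \<delta>" using \<eta> fin by (simp add: \<delta>_def card_gt_0_iff)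
  have "\<exists>K. K \<subseteq> g -` {v} \<and> compact K \<and> emeasure \<mu> (g -` {v} - K) \<le> ennreal \<delta>" for v
    using borel_prob_inner_compact[OF \<mu> level_sets \<delta>] by metis
  then obtain K where K: "\<And>v. K v \<subseteq> g -` {v}" "\<And>v. compact (K v)"
    "\<And>v. emeasure \<mu> (g -` {v} - K v) \<le> ennreal \<delta>"
    by metis
  have K_sets: "g -` {v} - K v \<in> sets \<mu>" for v
    unfolding sets by (intro sets.Diff level_sets borel_compact K(2))
  have "- (\<Union>v\<in>range g. K v) \<subseteq> (\<Union>v\<in>range g. g -` {v} - K v)" by auto
  then have "emeasure \<mu> (- (\<Union>v\<in>range g. K v)) \<le> emeasure \<mu> (\<Union>v\<in>range g. g -` {v} - K v)"
    by (rule emeasure_mono[OF _ sets.finite_UN[OF fin K_sets]])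
  also have "\<dots> \<le> (\<Sum>v\<in>range g. emeasure \<mu> (g -` {v} - K v))"
    using K_sets fin by (intro emeasure_subadditive_finite) auto
  also have "\<dots> \<le> (\<Sum>v\<in>range g. ennreal \<delta>)"
    by (intro sum_mono K(3))
  also have "\<dots> = ennreal \<eta>"
    using fin \<delta> by (simp add: \<delta>_def ennreal_of_nat_eq_real_of_nat card_gt_0_iff flip: ennreal_mult)
  finally show ?thesis using that K(1,2) by blast
qed

text \<open>This matters because the
  inf-convolution Q_c f need not be Borel.\<close>
lemma nn_integral_le_by_simple:
  assumes "\<And>g. simple_function M g \<Longrightarrow> g \<le> F \<Longrightarrow> (\<forall>x. g x < top) \<Longrightarrow> (\<integral>\<^sup>+x. g x \<partial>M) \<le> C"
  shows "(\<integral>\<^sup>+x. F x \<partial>M) \<le> C"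
  unfolding nn_integral_def_finite
  using assms by (intro SUP_least) (auto simp: nn_integral_eq_simple_integral)

lemma nn_integral_le_restrict_plus:
  fixes g :: "'a \<Rightarrow> ennreal"
  assumes "g \<in> borel_measurable M" "S \<in> sets M" "\<And>x. g x \<le> ennreal C"
  shows "(\<integral>\<^sup>+x. g x \<partial>M) \<le> (\<integral>\<^sup>+x. g x * indicator S x \<partial>M) + ennreal C * emeasure M (space M - S)"
proof -
  have "(\<integral>\<^sup>+x. g x \<partial>M) \<le> (\<integral>\<^sup>+x. g x * indicator S x + ennreal C * indicator (space M - S) x \<partial>M)"
    using assms(3) by (intro nn_integral_mono) (auto split: split_indicator)
  also have "\<dots> = (\<integral>\<^sup>+x. g x * indicator S x \<partial>M) + ennreal C * emeasure M (space M - S)"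
    using assms(1,2) by (subst nn_integral_add) (auto simp: nn_integral_cmult_indicator)
  finally show ?thesis .
qed

definition positive_pieces :: "('a \<Rightarrow> ennreal) \<Rightarrow> (ennreal \<Rightarrow> 'a set) \<Rightarrow> ennreal set" where
  "positive_pieces g K = {v \<in> range g. v \<noteq> 0 \<and> K v \<noteq> {}}"

definition log_step :: "('a \<Rightarrow> ennreal) \<Rightarrow> (ennreal \<Rightarrow> 'a set) \<Rightarrow> real \<Rightarrow> 'a \<Rightarrow> real" where
  "log_step g K M x =
     (if x \<in> (\<Union>v\<in>positive_pieces g K. K v) then ln (enn2real (g x)) else - M)"

lemma log_step_function:
  fixes g :: "'a::t2_space \<Rightarrow> ennreal" and K :: "ennreal \<Rightarrow> 'a set" and M :: real
  assumes g: "g \<in> borel_measurable borel" "finite (range g)" "\<And>x. g x < top"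
    and K: "\<And>v. compact (K v)" "\<And>v. K v \<subseteq> g -` {v}"
  defines "V \<equiv> positive_pieces g K" and "k \<equiv> log_step g K M"
  shows "k \<in> borel_measurable borel" and "bounded (range k)"
    and "\<And>x. k x \<le> - M \<or> (\<exists>v\<in>V. x \<in> K v \<and> k x \<le> ln (enn2real v))"
    and "\<And>x. g x * indicator (\<Union>v\<in>range g. K v) x \<le> ennreal (exp (k x))"
    and "\<And>v x. v \<in> V \<Longrightarrow> x \<in> K v \<Longrightarrow> k x = ln (enn2real v) \<and> ennreal (exp (k x)) = g x"
proof -
  have g_on_K: "g x = v" if "x \<in> K v" for x v using K(2) that by auto
  have exp_ln: "ennreal (exp (ln (enn2real v))) = v" if "v \<in> V" for v
  proof -
    have "v < top" "v \<noteq> 0" using that g(3) by (auto simp: V_def positive_pieces_def)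
    then have "0 < enn2real v" by (simp add: enn2real_positive_iff zero_less_iff_neq_zero)
    then show ?thesis using \<open>v < top\<close> by simp
  qed
  then show "\<And>v x. v \<in> V \<Longrightarrow> x \<in> K v \<Longrightarrow> k x = ln (enn2real v) \<and> ennreal (exp (k x)) = g x"
    using g_on_K by (auto simp: k_def log_step_def V_def)
  have "finite V"
    by (rule finite_subset[OF _ g(2)]) (auto simp: V_def positive_pieces_def)
  then have [measurable]: "(\<Union>v\<in>V. K v) \<in> sets borel"
    by (intro borel_closed closed_UN ballI compact_imp_closed K(1))
  note [measurable] = g(1)
  show "k \<in> borel_measurable borel" unfolding k_def log_step_def[abs_def] V_def[symmetric] by measurable
  have "range k \<subseteq> insert (- M) ((\<lambda>v. ln (enn2real v)) ` range g)" by (auto simp: k_def log_step_def)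
  then show "bounded (range k)"
    using g(2) by (meson bounded_subset finite_imageI finite_imp_bounded finite_insert)
  show "k x \<le> - M \<or> (\<exists>v\<in>V. x \<in> K v \<and> k x \<le> ln (enn2real v))" for x
    using g_on_K by (cases "x \<in> (\<Union>v\<in>V. K v)") (auto simp: k_def log_step_def V_def)
  show "g x * indicator (\<Union>v\<in>range g. K v) x \<le> ennreal (exp (k x))" for x
  proof (cases "x \<in> (\<Union>v\<in>range g. K v)")
    case True
    then obtain v where v: "x \<in> K v" by blast
    then have gx: "g x = v" by (rule g_on_K)
    show ?thesis
    proof (cases "v = 0")
      case False
      then have "v \<in> V" using v gx by (auto simp: V_def positive_pieces_def)
      then show ?thesis using exp_ln[OF \<open>v \<in> V\<close>] v gx True by (auto simp: k_def log_step_def V_def)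
    qed (use gx in simp)
  qed simp
qed

lemma simple_on_compacts_bound:
  fixes c c' :: "'a::t2_space \<Rightarrow> 'a \<Rightarrow> real" and g :: "'a \<Rightarrow> ennreal"
  assumes \<mu>: "borel_prob \<mu>"
    and transport: "\<forall>\<nu>. borel_prob \<nu> \<longrightarrow> enn2ereal (transport_cost c \<nu> \<mu>) \<le> rel_entropy \<nu> \<mu>"
    and lsc: "lsc2 c" and nonneg: "\<And>x y. 0 \<le> c x y" and sym: "\<And>x y. c x y = c y x"
    and c'_nonneg: "\<And>x y. 0 \<le> c' x y" and c'_le: "\<And>x y z. c' x y \<le> c x z + c z y"
    and f: "f \<in> borel_measurable borel" "\<And>x. \<bar>f x\<bar> \<le> M"
    and g: "g \<in> borel_measurable borel" "finite (range g)" "\<And>x. g x < top"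
      "\<And>x. g x \<le> ennreal (exp (Qc c' f x))"
    and K: "\<And>v. compact (K v)" "\<And>v. K v \<subseteq> g -` {v}"
  shows "(\<integral>\<^sup>+x. g x * indicator (\<Union>v\<in>range g. K v) x \<partial>\<mu>) \<le> ennreal (1 / (\<integral>x. exp (- f x) \<partial>\<mu>))"
proof -
  define V where "V = positive_pieces g K"
  define k where "k = log_step g K M"
  note step = log_step_function[where M=M, OF g(1-3) K, folded V_def k_def]
  have "ln (enn2real v) \<le> Qc c' f x" if "v \<in> V" "x \<in> K v" for v x
  proof -
    have kx: "k x = ln (enn2real v)" "ennreal (exp (k x)) = g x" using step(5)[OF that] by auto
    have "ennreal (exp (k x)) \<le> ennreal (exp (Qc c' f x))" using g(4)[of x] kx(2) by simp
    then show ?thesis unfolding kx(1) by (simp add: ennreal_le_iff)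
  qed
  moreover have "finite V" "\<And>v. v \<in> V \<Longrightarrow> compact (K v) \<and> K v \<noteq> {}"
    using g(2) K(1) by (auto simp: V_def positive_pieces_def)
  ultimately have "(\<integral>x. exp (k x) \<partial>\<mu>) * (\<integral>x. exp (- f x) \<partial>\<mu>) \<le> 1"
    using exp_integral_bound_for_compact_pieces[OF \<mu> transport lsc nonneg sym c'_nonneg c'_le f
        _ _ _ step(1,2,3)] by blast
  then have "(\<integral>x. exp (k x) \<partial>\<mu>) \<le> 1 / (\<integral>x. exp (- f x) \<partial>\<mu>)"
    using partition_function_pos(2)[OF \<mu>, of "\<lambda>x. - f x" M] f by (simp add: field_simps)
  moreover obtain B where "\<And>x. \<bar>k x\<bar> \<le> B" using bounded_range_abs_le[OF step(2)] by blast
  then have "(\<integral>\<^sup>+x. ennreal (exp (k x)) \<partial>\<mu>) = ennreal (\<integral>x. exp (k x) \<partial>\<mu>)"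
    using partition_function_pos(1)[OF \<mu> step(1)] by (intro nn_integral_eq_integral) auto
  moreover have "(\<integral>\<^sup>+x. g x * indicator (\<Union>v\<in>range g. K v) x \<partial>\<mu>) \<le> (\<integral>\<^sup>+x. ennreal (exp (k x)) \<partial>\<mu>)"
    using step(4) by (intro nn_integral_mono)
  ultimately show ?thesis
    by (metis ennreal_leI order_trans)
qed

text \<open>Every finite-valued simple function below exp (Q_c' f) integrates to at most the
  reciprocal of the integral of exp (- f): approximate its level sets from inside by compact
  sets, losing at most epsilon.\<close>
lemma simple_below_exp_Qc_bound:
  fixes c c' :: "'a::polish_space \<Rightarrow> 'a \<Rightarrow> real" and g :: "'a \<Rightarrow> ennreal"
  assumes \<mu>: "borel_prob \<mu>"
    and transport: "\<forall>\<nu>. borel_prob \<nu> \<longrightarrow> enn2ereal (transport_cost c \<nu> \<mu>) \<le> rel_entropy \<nu> \<mu>"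
    and lsc: "lsc2 c" and nonneg: "\<And>x y. 0 \<le> c x y" and sym: "\<And>x y. c x y = c y x"
    and c'_nonneg: "\<And>x y. 0 \<le> c' x y" and c'_le: "\<And>x y z. c' x y \<le> c x z + c z y"
    and f: "f \<in> borel_measurable borel" "\<And>x. \<bar>f x\<bar> \<le> M"
    and g: "simple_function \<mu> g" "\<And>x. g x \<le> ennreal (exp (Qc c' f x))" "\<And>x. g x < top"
  shows "(\<integral>\<^sup>+x. g x \<partial>\<mu>) \<le> ennreal (1 / (\<integral>x. exp (- f x) \<partial>\<mu>))"
proof (rule ennreal_le_epsilon)
  fix \<epsilon> :: real assume \<epsilon>: "0 < \<epsilon>"
  have sets: "sets \<mu> = sets borel" using \<mu> by (simp add: borel_prob_def)
  have space: "space \<mu> = UNIV" using sets_eq_imp_space_eq[OF sets] by simp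
  have g_meas: "g \<in> borel_measurable borel"
    using borel_measurable_simple_function[OF g(1)] by (simp add: measurable_cong_sets[OF sets refl])
  have fin: "finite (range g)" using g(1) by (simp add: simple_function_def space)
  define C where "C = enn2real (Max (range g))"
  have g_le_C: "g x \<le> ennreal C" for x
    using fin g(3) Max_in[OF fin] by (simp add: C_def less_top)
  define \<eta> where "\<eta> = \<epsilon> / (C + 1)"
  have C: "0 \<le> C" by (simp add: C_def)
  have "C * \<eta> \<le> \<epsilon>"
    using C \<epsilon> by (simp add: \<eta>_def field_simps)
  then have \<eta>: "0 < \<eta>" "ennreal C * ennreal \<eta> \<le> ennreal \<epsilon>"
    using C \<epsilon> by (auto simp: \<eta>_def simp flip: ennreal_mult intro!: ennreal_leI)
  obtain K where K: "\<And>v. compact (K v)" "\<And>v. K v \<subseteq> g -` {v}"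
    and small: "emeasure \<mu> (- (\<Union>v\<in>range g. K v)) \<le> ennreal \<eta>"
    using simple_function_compact_partition[OF \<mu> g(1) \<eta>(1)] by blast
  define S where "S = (\<Union>v\<in>range g. K v)"
  have S_sets: "S \<in> sets borel"
    unfolding S_def using fin by (intro borel_closed closed_UN ballI compact_imp_closed K(1)) auto
  have "(\<integral>\<^sup>+x. g x \<partial>\<mu>) \<le> (\<integral>\<^sup>+x. g x * indicator S x \<partial>\<mu>) + ennreal C * emeasure \<mu> (- S)"
    using nn_integral_le_restrict_plus[of g \<mu> S C] g_meas S_sets g_le_C
    by (simp add: sets space measurable_cong_sets[OF sets refl] Compl_eq_Diff_UNIV)
  moreover have "(\<integral>\<^sup>+x. g x * indicator S x \<partial>\<mu>) \<le> ennreal (1 / (\<integral>x. exp (- f x) \<partial>\<mu>))"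
    unfolding S_def
    by (rule simple_on_compacts_bound[OF \<mu> transport lsc nonneg sym c'_nonneg c'_le f
          g_meas fin g(3,2) K])
  moreover have "ennreal C * emeasure \<mu> (- S) \<le> ennreal \<epsilon>"
    using small \<eta>(2) unfolding S_def by (meson mult_left_mono order_trans zero_le)
  ultimately show "(\<integral>\<^sup>+x. g x \<partial>\<mu>) \<le> ennreal (1 / (\<integral>x. exp (- f x) \<partial>\<mu>)) + ennreal \<epsilon>"
    by (meson add_mono order_trans)
qed

theorem property_tau_of_transport_inequality:
  fixes c c' :: "'a::polish_space \<Rightarrow> 'a \<Rightarrow> real"
  assumes \<mu>: "borel_prob \<mu>"
    and transport: "\<forall>\<nu>. borel_prob \<nu> \<longrightarrow> enn2ereal (transport_cost c \<nu> \<mu>) \<le> rel_entropy \<nu> \<mu>"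
    and lsc: "lsc2 c" and nonneg: "\<And>x y. 0 \<le> c x y" and sym: "\<And>x y. c x y = c y x"
    and c'_nonneg: "\<And>x y. 0 \<le> c' x y" and c'_le: "\<And>x y z. c' x y \<le> c x z + c z y"
  shows "property_tau \<mu> c'"
  unfolding property_tau_def
proof (intro allI impI)
  fix f :: "'a \<Rightarrow> real"
  assume "f \<in> borel_measurable borel \<and> bounded (range f)"
  then obtain M where f: "f \<in> borel_measurable borel" "\<And>x. \<bar>f x\<bar> \<le> M"
    using bounded_range_abs_le by blast
  define Z where "Z = (\<integral>x. exp (- f x) \<partial>\<mu>)"
  have Z: "0 < Z" "(\<integral>\<^sup>+x. ennreal (exp (- f x)) \<partial>\<mu>) = ennreal Z"
    using partition_function_pos[OF \<mu>, of "\<lambda>x. - f x" M] f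
    by (auto simp: Z_def intro: nn_integral_eq_integral)
  have "(\<integral>\<^sup>+x. ennreal (exp (Qc c' f x)) \<partial>\<mu>) \<le> ennreal (1 / Z)"
    unfolding Z_def
    by (rule nn_integral_le_by_simple,
        rule simple_below_exp_Qc_bound[OF \<mu> transport lsc nonneg sym c'_nonneg c'_le f])
      (auto simp: le_fun_def)
  then have "(\<integral>\<^sup>+x. ennreal (exp (Qc c' f x)) \<partial>\<mu>) * ennreal Z \<le> ennreal (1 / Z) * ennreal Z"
    by (rule mult_right_mono) simp
  also have "\<dots> = 1" using Z(1) by (simp flip: ennreal_mult)
  finally show "(\<integral>\<^sup>+x. ennreal (exp (Qc c' f x)) \<partial>\<mu>) * (\<integral>\<^sup>+x. ennreal (exp (- f x)) \<partial>\<mu>) \<le> 1"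
    unfolding Z(2) .
qed

theorem mainTheorem17:
  fixes d :: "'a::polish_space \<Rightarrow> 'a \<Rightarrow> real"
    and \<theta> :: "real \<Rightarrow> real"
    and \<mu> :: "'a measure"
  assumes "is_metric d"
    and "lsc2 d"
    and "convex_on {0..} \<theta>"
    and "\<theta> 0 = 0"
    and "\<forall>t\<ge>0. 0 \<le> \<theta> t"
    and "borel_prob \<mu>"
    and "\<forall>\<nu>. borel_prob \<nu> \<longrightarrow>
           enn2ereal (transport_cost (\<lambda>x y. \<theta> (d x y)) \<nu> \<mu>) \<le> rel_entropy \<nu> \<mu>"
  shows "property_tau \<mu> (\<lambda>x y. 2 * \<theta> (d x y / 2))"
proof (rule property_tau_of_transport_inequality[OF assms(6,7)])
  have d: "\<And>x y. 0 \<le> d x y" "\<And>x y. d x y = d y x"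
    using assms(1) unfolding is_metric_def by blast+
  show "lsc2 (\<lambda>x y. \<theta> (d x y))"
    using lsc2_convex_comp[OF assms(2) _ assms(3-5)] d(1) by blast
  show "\<And>x y. 0 \<le> \<theta> (d x y)" "\<And>x y. 0 \<le> 2 * \<theta> (d x y / 2)"
    using assms(5) d(1) by simp_all
  show "\<And>x y. \<theta> (d x y) = \<theta> (d y x)"
    using d(2) by simp
  show "\<And>x y z. 2 * \<theta> (d x y / 2) \<le> \<theta> (d x z) + \<theta> (d z y)"
    by (rule half_cost_triangle[OF assms(1,3-5)])
qed

end
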